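(* The class of split graphs is degree sandwich monotone; that is, for every split graph $G$ and every set $F\subseteq E(G)$ such that $G-F$ is a split graph, every degree-minimal edge $e$ in $F$ satisfies that $G-e$ is a split graph.
   Context: A split graph is a graph whose vertex set can be partitioned into a clique and an independent set. Given a graph $G$ and $F\subseteq E(G)$, an edge $e\in F$ is degree-minimal in $F$ if its endpoints can be named $u,v$ so that (i) $u$ has the smallest degree in $G$ among all vertices incident to an edge of $F$, and (ii) $v$ has the smallest degree in $G$ among all vertices $w$ with $uw\in F$. *)

theory Defs
  imports Main
begin

definition simple_graph :: "'a set \<Rightarrow> 'a set set \<Rightarrow> bool" where
  "simple_graph V E \<longleftrightarrow> finite V \<and> (\<forall>e\<in>E. e \<subseteq> V \<and> card e = 2)"

definition degree :: "'a set set \<Rightarrow> 'a \<Rightarrow> nat" where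
  "degree E v = card {e \<in> E. v \<in> e}"

definition is_clique :: "'a set set \<Rightarrow> 'a set \<Rightarrow> bool" where
  "is_clique E K \<longleftrightarrow> (\<forall>x\<in>K. \<forall>y\<in>K. x \<noteq> y \<longrightarrow> {x, y} \<in> E)"

definition is_independent :: "'a set set \<Rightarrow> 'a set \<Rightarrow> bool" where
  "is_independent E I \<longleftrightarrow> (\<forall>x\<in>I. \<forall>y\<in>I. {x, y} \<notin> E)"

definition split_graph :: "'a set \<Rightarrow> 'a set set \<Rightarrow> bool" where
  "split_graph V E \<longleftrightarrow> (\<exists>K I. K \<union> I = V \<and> K \<inter> I = {} \<and> is_clique E K \<and> is_independent E I)"

definition degree_minimal :: "'a set set \<Rightarrow> 'a set set \<Rightarrow> 'a set \<Rightarrow> bool" where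
  "degree_minimal E F e \<longleftrightarrow> e \<in> F \<and> (\<exists>u v. e = {u, v} \<and>
      (\<forall>x \<in> \<Union>F. degree E u \<le> degree E x) \<and>
      (\<forall>w. {u, w} \<in> F \<longrightarrow> degree E v \<le> degree E w))"

end

theory Submission
  imports Defs
begin

(* Fix a split partition (K, I) of G with |K| maximum. Then every vertex of I misses some vertex
   of K, so it has degree < |K|, while a vertex of K has degree >= |K| exactly when it has a
   neighbour in I. If e = uv is not inside K, then (K, I) still splits G - e; if it is and
   deg u < |K|, then u has no neighbour in I and (K - u, I + u) splits G - e. By minimality of u
   the remaining case is that every vertex of F has degree >= |K|. Then all of them lie in K and
   are joined to I by edges outside F. A split partition (K', I') of G - F puts an end w of some
   edge of F into I', and the single vertex of I \<inter> K' is then adjacent to all of K,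
   contradicting the maximality of |K|. *)

definition split_partition :: "'a set \<Rightarrow> 'a set set \<Rightarrow> 'a set \<Rightarrow> 'a set \<Rightarrow> bool" where
  "split_partition V E K I \<longleftrightarrow>
     K \<union> I = V \<and> K \<inter> I = {} \<and> is_clique E K \<and> is_independent E I"

definition maximum_split_partition :: "'a set \<Rightarrow> 'a set set \<Rightarrow> 'a set \<Rightarrow> 'a set \<Rightarrow> bool" where
  "maximum_split_partition V E K I \<longleftrightarrow>
     split_partition V E K I \<and> (\<forall>K' I'. split_partition V E K' I' \<longrightarrow> card K' \<le> card K)"

definition neighbours :: "'a set set \<Rightarrow> 'a \<Rightarrow> 'a set" where
  "neighbours E x = {y. {x, y} \<in> E}"

lemma split_graph_iff_split_partition: "split_graph V E \<longleftrightarrow> (\<exists>K I. split_partition V E K I)"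
  by (simp add: split_graph_def split_partition_def)

lemma neighbours_subset:
  assumes "simple_graph V E"
  shows "neighbours E x \<subseteq> V - {x}"
  using assms by (auto simp: simple_graph_def neighbours_def)

lemma degree_eq_card_neighbours:
  assumes "simple_graph V E"
  shows "degree E x = card (neighbours E x)"
proof -
  have "bij_betw (\<lambda>y. {x, y}) (neighbours E x) {e \<in> E. x \<in> e}"
  proof (rule bij_betw_imageI)
    show "inj_on (\<lambda>y. {x, y}) (neighbours E x)"
      by (auto simp: inj_on_def doubleton_eq_iff)
    have "e \<in> (\<lambda>y. {x, y}) ` neighbours E x" if "e \<in> E" "x \<in> e" for e
    proof -
      have "card e = 2" using assms \<open>e \<in> E\<close> by (simp add: simple_graph_def)
      with \<open>x \<in> e\<close> obtain y where "e = {x, y}" by (auto simp: card_2_iff)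
      with \<open>e \<in> E\<close> show ?thesis by (auto simp: neighbours_def)
    qed
    then show "(\<lambda>y. {x, y}) ` neighbours E x = {e \<in> E. x \<in> e}"
      by (auto simp: neighbours_def)
  qed
  then show ?thesis
    unfolding degree_def by (simp add: bij_betw_same_card)
qed

lemma maximum_split_partition_exists:
  assumes "finite V" "split_graph V E"
  shows "\<exists>K I. maximum_split_partition V E K I"
proof -
  obtain K0 I0 where "split_partition V E K0 I0"
    using assms(2) split_graph_iff_split_partition by blast
  moreover have "card K < Suc (card V)" if "split_partition V E K I" for K I
    using that assms(1) by (auto simp: split_partition_def less_Suc_eq_le intro: card_mono)
  ultimately have "\<exists>KI. split_partition V E (fst KI) (snd KI) \<and>
      (\<forall>KI'. split_partition V E (fst KI') (snd KI') \<longrightarrow> card (fst KI') \<le> card (fst KI))"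
    by (intro ex_has_greatest_nat[where k = "(K0, I0)" and b = "Suc (card V)"]) auto
  then show ?thesis
    unfolding maximum_split_partition_def by fastforce
qed

lemma maximum_split_partition_non_adjacent:
  assumes "finite V" "maximum_split_partition V E K I" "y \<in> I"
  shows "\<exists>z\<in>K. {y, z} \<notin> E"
proof (rule ccontr)
  assume "\<not> ?thesis"
  with assms(2,3) have "split_partition V E (insert y K) (I - {y})"
    unfolding maximum_split_partition_def split_partition_def is_clique_def is_independent_def
    by (auto simp: insert_commute)
  with assms(2) have "card (insert y K) \<le> card K"
    unfolding maximum_split_partition_def by blast
  moreover have "finite K" "y \<notin> K"
    using assms by (auto simp: maximum_split_partition_def split_partition_def finite_subset)
  ultimately show False by simp
qed

lemma split_partition_clique_degree_iff:
  assumes "simple_graph V E" "split_partition V E K I" "x \<in> K"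
  shows "card K \<le> degree E x \<longleftrightarrow> (\<exists>y\<in>I. {x, y} \<in> E)"
proof -
  have "finite V" using assms(1) by (simp add: simple_graph_def)
  then have fin: "finite K" "finite (neighbours E x)"
    using assms(2) neighbours_subset[OF assms(1), of x]
    by (auto simp: split_partition_def finite_subset)
  have deg: "degree E x = card (neighbours E x)"
    using assms(1) by (rule degree_eq_card_neighbours)
  have clique: "K - {x} \<subseteq> neighbours E x"
    using assms(2,3) by (auto simp: split_partition_def is_clique_def neighbours_def)
  show ?thesis
  proof
    assume "card K \<le> degree E x"
    show "\<exists>y\<in>I. {x, y} \<in> E"
    proof (rule ccontr)
      assume "\<not> ?thesis"
      then have "neighbours E x \<subseteq> K - {x}"
        using neighbours_subset[OF assms(1), of x] assms(2)
        by (auto simp: split_partition_def neighbours_def)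
      then have "degree E x \<le> card (K - {x})"
        using deg fin(1) by (simp add: card_mono)
      moreover have "card (K - {x}) < card K"
        using fin(1) assms(3) by (rule card_Diff1_less)
      ultimately show False
        using \<open>card K \<le> degree E x\<close> by linarith
    qed
  next
    assume "\<exists>y\<in>I. {x, y} \<in> E"
    then obtain y where "y \<in> I" "{x, y} \<in> E" by blast
    then have "y \<notin> K - {x}" "insert y (K - {x}) \<subseteq> neighbours E x"
      using assms(2) clique by (auto simp: split_partition_def neighbours_def)
    then have "card K = card (insert y (K - {x}))"
      using fin(1) assms(3) by (metis card_Suc_Diff1 card_insert_disjoint finite_Diff)
    also have "\<dots> \<le> degree E x"
      using deg fin(2) \<open>insert y (K - {x}) \<subseteq> neighbours E x\<close> by (simp add: card_mono)
    finally show "card K \<le> degree E x" .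
  qed
qed

lemma maximum_split_partition_independent_degree_less:
  assumes "simple_graph V E" "maximum_split_partition V E K I" "y \<in> I"
  shows "degree E y < card K"
proof -
  have "finite V" using assms(1) by (simp add: simple_graph_def)
  then obtain z where "z \<in> K" "{y, z} \<notin> E"
    using maximum_split_partition_non_adjacent assms(2,3) by metis
  have part: "split_partition V E K I"
    using assms(2) by (simp add: maximum_split_partition_def)
  then have "finite K"
    using \<open>finite V\<close> by (auto simp: split_partition_def)
  have "neighbours E y \<subseteq> K - {z}"
  proof
    fix x assume "x \<in> neighbours E y"
    then have "x \<in> V" "{y, x} \<in> E"
      using neighbours_subset[OF assms(1)] by (auto simp: neighbours_def)
    with part assms(3) \<open>{y, z} \<notin> E\<close> show "x \<in> K - {z}"
      by (auto simp: split_partition_def is_independent_def)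
  qed
  then have "card (neighbours E y) \<le> card (K - {z})"
    using \<open>finite K\<close> by (simp add: card_mono)
  also have "\<dots> < card K"
    using \<open>finite K\<close> \<open>z \<in> K\<close> by (rule card_Diff1_less)
  finally show ?thesis
    by (simp add: degree_eq_card_neighbours[OF assms(1)])
qed

lemma maximum_split_partition_high_degree:
  assumes "simple_graph V E" "maximum_split_partition V E K I" "x \<in> V" "card K \<le> degree E x"
  shows "x \<in> K \<and> (\<exists>t\<in>I. {x, t} \<in> E)"
proof -
  have "x \<notin> I"
    using maximum_split_partition_independent_degree_less[OF assms(1,2)] assms(4) by fastforce
  with assms(2,3) have "x \<in> K"
    by (auto simp: maximum_split_partition_def split_partition_def)
  with assms show ?thesis
    using split_partition_clique_degree_iff by (fastforce simp: maximum_split_partition_def)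
qed

lemma split_partition_remove_edge:
  assumes "split_partition V E K I" "\<not> {u, v} \<subseteq> K"
  shows "split_partition V (E - {{u, v}}) K I"
  using assms
  by (auto simp: split_partition_def is_clique_def is_independent_def doubleton_eq_iff)

lemma split_partition_move_to_independent:
  assumes "simple_graph V E" "split_partition V E K I" "w \<in> K" "\<forall>y\<in>I. {w, y} \<notin> E"
  shows "split_partition V (E - {{w, w'}}) (K - {w}) (insert w I)"
proof -
  have "{w} \<notin> E" using assms(1) by (auto simp: simple_graph_def)
  with assms(2-4) show ?thesis
    unfolding split_partition_def is_clique_def is_independent_def
    by (auto simp: doubleton_eq_iff insert_commute)
qed

(* The I-neighbour r of w lies in K', so K' \<inter> I = {r}; every other x \<in> K \<inter> I' spans with w
   an edge of F, so its I-neighbour outside F is r as well. *)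
lemma split_partitions_common_neighbour:
  assumes part: "split_partition V E K I"
    and part': "split_partition V (E - F) K' I'"
    and F_vertices: "\<forall>x\<in>\<Union>F. x \<in> K \<and> (\<exists>t\<in>I. {x, t} \<in> E - F)"
    and "w \<in> I'" "w \<in> \<Union>F"
  shows "\<exists>r\<in>I. \<forall>x\<in>K. {r, x} \<in> E"
proof -
  have in_K': "t \<in> K'" if "x \<in> I'" "t \<in> I" "{x, t} \<in> E - F" for x t
    using that part part'
    by (auto simp: split_partition_def is_independent_def)
  obtain r where "r \<in> I" "{w, r} \<in> E - F"
    using F_vertices \<open>w \<in> \<Union>F\<close> by blast
  with \<open>w \<in> I'\<close> have "r \<in> K'" by (rule in_K')
  have unique: "t = r" if "t \<in> I" "t \<in> K'" for t
    using that \<open>r \<in> I\<close> \<open>r \<in> K'\<close> part part'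
    unfolding split_partition_def is_clique_def is_independent_def by blast
  have "{r, x} \<in> E" if "x \<in> K" for x
  proof (cases "x \<in> K'")
    case True
    have "r \<noteq> x"
      using \<open>r \<in> I\<close> \<open>x \<in> K\<close> part by (auto simp: split_partition_def)
    with True \<open>r \<in> K'\<close> part' show ?thesis
      by (auto simp: split_partition_def is_clique_def)
  next
    case False
    with \<open>x \<in> K\<close> part part' have "x \<in> I'"
      by (auto simp: split_partition_def)
    have "x \<in> \<Union>F"
    proof (cases "x = w")
      case False
      have "w \<in> K" using F_vertices \<open>w \<in> \<Union>F\<close> by blast
      with False \<open>x \<in> K\<close> \<open>x \<in> I'\<close> \<open>w \<in> I'\<close> part part' have "{x, w} \<in> F"
        by (auto simp: split_partition_def is_clique_def is_independent_def)
      then show ?thesis by blast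
    qed (use \<open>w \<in> \<Union>F\<close> in simp)
    then obtain t where "t \<in> I" "{x, t} \<in> E - F"
      using F_vertices by blast
    moreover from this have "t = r"
      using in_K' \<open>x \<in> I'\<close> unique by blast
    ultimately show ?thesis by (auto simp: insert_commute)
  qed
  with \<open>r \<in> I\<close> show ?thesis by blast
qed

lemma sandwich_has_low_degree_vertex:
  assumes graph: "simple_graph V E" and max: "maximum_split_partition V E K I"
    and "F \<subseteq> E" "F \<noteq> {}" "split_graph V (E - F)"
  shows "\<exists>x\<in>\<Union>F. degree E x < card K"
proof (rule ccontr)
  assume "\<not> ?thesis"
  then have high_degree: "card K \<le> degree E x" if "x \<in> \<Union>F" for x
    using that not_less by blast
  have "finite V" and F_V: "\<Union>F \<subseteq> V"
    using graph \<open>F \<subseteq> E\<close> by (auto simp: simple_graph_def)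
  have part: "split_partition V E K I"
    using max by (simp add: maximum_split_partition_def)
  have high: "x \<in> K \<and> (\<exists>t\<in>I. {x, t} \<in> E)" if "x \<in> \<Union>F" for x
    using maximum_split_partition_high_degree[OF graph max] F_V high_degree that by blast
  have F_vertices: "\<forall>x\<in>\<Union>F. x \<in> K \<and> (\<exists>t\<in>I. {x, t} \<in> E - F)"
  proof
    fix x assume "x \<in> \<Union>F"
    then obtain t where "x \<in> K" "t \<in> I" "{x, t} \<in> E"
      using high by blast
    moreover have "t \<notin> \<Union>F"
      using high \<open>t \<in> I\<close> part by (auto simp: split_partition_def)
    ultimately show "x \<in> K \<and> (\<exists>t\<in>I. {x, t} \<in> E - F)" by blast
  qed
  obtain f where "f \<in> F"
    using \<open>F \<noteq> {}\<close> by blast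
  then have "card f = 2"
    using \<open>F \<subseteq> E\<close> graph by (auto simp: simple_graph_def)
  then obtain a b where ab: "f = {a, b}" "a \<noteq> b"
    by (meson card_2_iff)
  obtain K' I' where part': "split_partition V (E - F) K' I'"
    using \<open>split_graph V (E - F)\<close> by (auto simp: split_graph_iff_split_partition)
  have "\<not> (a \<in> K' \<and> b \<in> K')"
    using \<open>f \<in> F\<close> ab part' unfolding split_partition_def is_clique_def by blast
  moreover have "a \<in> \<Union>F" "b \<in> \<Union>F"
    using \<open>f \<in> F\<close> ab by auto
  ultimately obtain w where "w \<in> I'" "w \<in> \<Union>F"
    using F_V part' unfolding split_partition_def by blast
  then obtain r where "r \<in> I" "\<forall>x\<in>K. {r, x} \<in> E"
    using split_partitions_common_neighbour[OF part part' F_vertices] by blast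
  moreover obtain z where "z \<in> K" "{r, z} \<notin> E"
    using maximum_split_partition_non_adjacent[OF \<open>finite V\<close> max \<open>r \<in> I\<close>] by blast
  ultimately show False by blast
qed

theorem theorem4p1:
  fixes V :: "'a set" and E F :: "'a set set" and e :: "'a set"
  assumes "simple_graph V E"
    and "split_graph V E"
    and "F \<subseteq> E"
    and "split_graph V (E - F)"
    and "degree_minimal E F e"
  shows "split_graph V (E - {e})"
proof -
  have "finite V" using assms(1) by (simp add: simple_graph_def)
  with assms(2) obtain K I where max: "maximum_split_partition V E K I"
    using maximum_split_partition_exists by blast
  then have part: "split_partition V E K I"
    by (simp add: maximum_split_partition_def)
  from assms(5) obtain u v where e: "e = {u, v}" "e \<in> F"
    and u_min: "\<forall>x\<in>\<Union>F. degree E u \<le> degree E x"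
    unfolding degree_minimal_def by blast
  show ?thesis
  proof (cases "u \<in> K \<and> v \<in> K")
    case False
    then show ?thesis
      using split_partition_remove_edge[OF part] e split_graph_iff_split_partition by blast
  next
    case True
    obtain x where "x \<in> \<Union>F" "degree E x < card K"
      using sandwich_has_low_degree_vertex[OF assms(1) max assms(3)] assms(4) e(2) by blast
    with u_min have "\<not> card K \<le> degree E u" by fastforce
    with True have "\<forall>y\<in>I. {u, y} \<notin> E"
      using split_partition_clique_degree_iff[OF assms(1) part] by blast
    with True show ?thesis
      using split_partition_move_to_independent[OF assms(1) part] e split_graph_iff_split_partition
      by blast
  qed
qed

end
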